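(* Let $M$ be a compact metric space and $f:M\to M$ a continuous map such that $[a_{f,\mathcal{U}}(n)]\in\mathbb{L}$ for every finite open covering $\mathcal{U}$ of $M$. Then $o(f)\in\overline{\mathbb{L}}$ and the topological entropy satisfies $h(f)=0$.
   Context: Let $\mathcal{O}$ be the set of non-decreasing sequences $a:\mathbb{N}\to[0,\infty)$, $a\approx b$ iff $c_1a(n)\le b(n)\le c_2a(n)$ for all $n$ for some constants $0<c_1\le c_2$, $\mathbb{O}=\mathcal{O}/\!\approx$ with classes $[a(n)]$, ordered by $[a(n)]\le[b(n)]$ iff $a(n)\le Cb(n)$ for all $n$ for some $C>0$; $\overline{\mathbb{O}}$ is its Dedekind–MacNeille completion. $\mathbb{L}$ is the set of classes $[a(n)]$ with $[a(mn)]=[a(n)]$ for some integer $m\ge2$, and $\overline{\mathbb{L}}=\{\sup(\Gamma)\in\overline{\mathbb{O}}:\Gamma\subset\mathbb{L}\text{ countable}\}$. For a finite open covering $\mathcal{U}=\{U_1,\dots,U_k\}$ of $M$, $\mathcal{U}^n=\{U_{i_0}\cap f^{-1}(U_{i_1})\cap\cdots\cap f^{-n}(U_{i_n})\neq\emptyset\}$ and $a_{f,\mathcal{U}}(n)$ is the minimal cardinality of a subcovering of $\mathcal{U}^n$. The generalized entropy is $o(f)=\sup\{[a_{f,\mathcal{U}}(n)]:\mathcal{U}\text{ finite open covering}\}\in\overline{\mathbb{O}}$ (equivalently the supremum over $\varepsilon>0$ of the classes of the minimal cardinalities of $(n,\varepsilon)$-generators). $h(f)$ denotes the classical topological entropy.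 *)

theory Defs
  imports "HOL-Analysis.Analysis" "HOL-Library.Extended_Real"
begin

definition OSeqs :: "(nat \<Rightarrow> real) set" where
  "OSeqs = {a. mono a \<and> (\<forall>n. 0 \<le> a n)}"

definition seq_equiv :: "(nat \<Rightarrow> real) \<Rightarrow> (nat \<Rightarrow> real) \<Rightarrow> bool" where
  "seq_equiv a b \<longleftrightarrow> (\<exists>c1 c2. 0 < c1 \<and> c1 \<le> c2 \<and> (\<forall>n. c1 * a n \<le> b n \<and> b n \<le> c2 * a n))"

definition seq_le :: "(nat \<Rightarrow> real) \<Rightarrow> (nat \<Rightarrow> real) \<Rightarrow> bool" where
  "seq_le a b \<longleftrightarrow> (\<exists>C>0. \<forall>n. a n \<le> C * b n)"

text \<open>Dedekind-MacNeille completion: an element of the completion is represented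
  by its cut, i.e. the set of (representatives of) classes below it.
  Upper and lower bounds inside O:\<close>
definition upper_bounds :: "(nat \<Rightarrow> real) set \<Rightarrow> (nat \<Rightarrow> real) set" where
  "upper_bounds S = {b \<in> OSeqs. \<forall>a\<in>S. seq_le a b}"

definition lower_bounds :: "(nat \<Rightarrow> real) set \<Rightarrow> (nat \<Rightarrow> real) set" where
  "lower_bounds T = {a \<in> OSeqs. \<forall>b\<in>T. seq_le a b}"

definition sup_cut :: "(nat \<Rightarrow> real) set \<Rightarrow> (nat \<Rightarrow> real) set" where
  "sup_cut S = lower_bounds (upper_bounds S)"

definition LSeqs :: "(nat \<Rightarrow> real) set" where
  "LSeqs = {a \<in> OSeqs. \<exists>m::nat. 2 \<le> m \<and> seq_equiv a (\<lambda>n. a (m * n))}"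

definition LBar :: "(nat \<Rightarrow> real) set set" where
  "LBar = {sup_cut \<Gamma> | \<Gamma>. countable \<Gamma> \<and> \<Gamma> \<subseteq> LSeqs}"

definition finite_open_cover :: "'a::metric_space set \<Rightarrow> 'a set set \<Rightarrow> bool" where
  "finite_open_cover M \<U> \<longleftrightarrow> finite \<U> \<and> (\<forall>U\<in>\<U>. openin (top_of_set M) U) \<and> \<Union>\<U> = M"

definition cover_iter :: "'a set \<Rightarrow> ('a \<Rightarrow> 'a) \<Rightarrow> 'a set set \<Rightarrow> nat \<Rightarrow> 'a set set" where
  "cover_iter M f \<U> n =
     {V. V \<noteq> {} \<and> (\<exists>s::nat \<Rightarrow> 'a set. (\<forall>j\<le>n. s j \<in> \<U>) \<and>
                        V = {x\<in>M. \<forall>j\<le>n. (f ^^ j) x \<in> s j})}"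

definition cover_growth :: "'a set \<Rightarrow> ('a \<Rightarrow> 'a) \<Rightarrow> 'a set set \<Rightarrow> nat \<Rightarrow> real" where
  "cover_growth M f \<U> n =
     real (Inf {card \<V> | \<V>. \<V> \<subseteq> cover_iter M f \<U> n \<and> finite \<V> \<and> \<Union>\<V> = M})"

definition gen_entropy :: "'a::metric_space set \<Rightarrow> ('a \<Rightarrow> 'a) \<Rightarrow> (nat \<Rightarrow> real) set" where
  "gen_entropy M f = sup_cut {cover_growth M f \<U> | \<U>. finite_open_cover M \<U>}"

text \<open>Classical topological entropy (Adler-Konheim-McAndrew):
  h(f) = sup over finite open covers U of lim (1/(n+1)) log a_{f,U}(n)
  (the limit exists by subadditivity; we use limsup).\<close>
definition top_entropy :: "'a::metric_space set \<Rightarrow> ('a \<Rightarrow> 'a) \<Rightarrow> ereal" where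
  "top_entropy M f =
     (SUP \<U>\<in>{\<U>. finite_open_cover M \<U>}.
        limsup (\<lambda>n. ereal (ln (cover_growth M f \<U> n) / real (Suc n))))"

end

theory Submission
  imports Defs "HOL-Real_Asymp.Real_Asymp"
begin

text \<open>If \<open>[a] \<in> \<bbbL>\<close>, say \<open>a(m n) \<le> D a(n)\<close>, then \<open>a(m\<^sup>k) \<le> D\<^sup>k a(1)\<close>, so \<open>a\<close> grows at most
  polynomially, \<open>log a(n) / n \<rightarrow> 0\<close>, and every cover contributes zero to \<open>h(f)\<close>.
  For \<open>o(f)\<close>: refining a cover can only increase \<open>a\<^bsub>f,\<U>\<^esub>\<close>, and by the Lebesgue number
  lemma every finite open cover of the compact space \<open>M\<close> is refined by a cover by balls of
  radius \<open>1/(k+1)\<close> for large \<open>k\<close>. Hence countably many ball covers are cofinal, and \<open>o(f)\<close> is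
  the supremum of their classes, which lie in \<open>\<bbbL>\<close>.\<close>

lemma seq_dilation_power_le:
  fixes a :: "nat \<Rightarrow> real"
  assumes "0 \<le> D" and dil: "\<And>n. a (m * n) \<le> D * a n"
  shows "a (m ^ k * n) \<le> D ^ k * a n"
proof (induction k)
  case (Suc k)
  have "a (m ^ Suc k * n) = a (m * (m ^ k * n))" by (simp add: mult.assoc)
  also have "\<dots> \<le> D * a (m ^ k * n)" by (rule dil)
  also have "\<dots> \<le> D * (D ^ k * a n)" using Suc \<open>0 \<le> D\<close> by (rule mult_left_mono)
  finally show ?case by simp
qed simp

lemma LSeqs_polynomial_bound:
  assumes "a \<in> LSeqs"
  obtains K p where "1 \<le> K" "0 \<le> p" "\<And>n. 1 \<le> n \<Longrightarrow> a n \<le> K * real n powr p"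
proof -
  obtain m :: nat where m: "2 \<le> m" "seq_equiv a (\<lambda>n. a (m * n))"
    and "mono a" and nonneg: "\<And>n. 0 \<le> a n"
    using assms unfolding LSeqs_def OSeqs_def by blast
  obtain c where c: "\<And>n. a (m * n) \<le> c * a n"
    using m(2) unfolding seq_equiv_def by blast
  define D where "D = max 1 c"
  have "1 \<le> D" unfolding D_def by simp
  have dil: "a (m * n) \<le> D * a n" for n
  proof -
    have "c * a n \<le> D * a n" using nonneg[of n] unfolding D_def by (intro mult_right_mono) auto
    then show ?thesis using c[of n] by linarith
  qed
  define p where "p = log m D"
  define K where "K = max 1 (D * a 1)"
  have "a n \<le> K * real n powr p" if n1: "1 \<le> n" for n
  proof -
    obtain k where k: "m ^ k \<le> n" "n < m ^ (k + 1)"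
      using ex_power_ivl1[OF m(1) n1] by blast
    have "a n \<le> a (m ^ (k + 1) * 1)" using \<open>mono a\<close> k(2) by (simp add: monoD)
    also have "\<dots> \<le> D ^ (k + 1) * a 1"
      using seq_dilation_power_le[of D a m "k + 1" 1] \<open>1 \<le> D\<close> dil by simp
    also have "\<dots> = (D * a 1) * real (m ^ k) powr p"
    proof -
      have "real (m ^ k) powr p = (real m powr p) ^ k"
        using m(1) by (simp add: powr_realpow[symmetric] powr_powr mult.commute)
      also have "\<dots> = D ^ k" using \<open>1 \<le> D\<close> m(1) by (simp add: p_def)
      finally show ?thesis by simp
    qed
    also have "\<dots> \<le> K * real n powr p"
      unfolding K_def using k(1) nonneg[of 1] \<open>1 \<le> D\<close> m(1)
      by (intro mult_mono powr_mono2) (auto simp: p_def)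
    finally show ?thesis .
  qed
  moreover have "0 \<le> p" unfolding p_def using \<open>1 \<le> D\<close> m(1) by simp
  ultimately show ?thesis using that[of K p] unfolding K_def by simp
qed

lemma ln_div_Suc_tendsto_0_if_powr_bounded:
  fixes a :: "nat \<Rightarrow> real"
  assumes nat: "\<And>n. a n \<in> \<nat>" and "1 \<le> K" "0 \<le> p"
    and bound: "\<And>n. 1 \<le> n \<Longrightarrow> a n \<le> K * real n powr p"
  shows "(\<lambda>n. ln (a n) / real (Suc n)) \<longlonglongrightarrow> 0"
proof (rule tendsto_sandwich)
  have ln_nonneg: "0 \<le> ln (a n)" for n \<comment> \<open>also for \<open>a n = 0\<close>, as \<open>ln 0 = 0\<close> in HOL\<close>
  proof -
    obtain N where "a n = real N" using nat[of n] by (auto elim: Nats_cases)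
    then show ?thesis by (cases N) auto
  qed
  then show "\<forall>\<^sub>F n in sequentially. 0 \<le> ln (a n) / real (Suc n)" by simp
  have ln_bound: "ln (a n) \<le> ln K + p * ln (real n)" if "1 \<le> n" for n
  proof (cases "a n = 0")
    case False
    then have "ln (a n) \<le> ln (K * real n powr p)"
      using nat[of n] bound[OF that] \<open>1 \<le> K\<close> that by (auto elim!: Nats_cases)
    also have "\<dots> = ln K + p * ln (real n)"
      using \<open>1 \<le> K\<close> that by (simp add: ln_mult)
    finally show ?thesis .
  qed (use \<open>1 \<le> K\<close> \<open>0 \<le> p\<close> that in simp)
  show "\<forall>\<^sub>F n in sequentially.
      ln (a n) / real (Suc n) \<le> (ln K + p * ln (real n)) / real (Suc n)"
    using eventually_ge_at_top[of 1] by eventually_elim (simp add: ln_bound divide_right_mono)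
  show "(\<lambda>n. (ln K + p * ln (real n)) / real (Suc n)) \<longlonglongrightarrow> 0"
    by real_asymp
qed simp

lemma seq_le_if_le: "(\<And>n. a n \<le> b n) \<Longrightarrow> seq_le a b"
  unfolding seq_le_def by (intro exI[of _ 1]) simp

lemma seq_le_trans:
  assumes "seq_le a b" "seq_le b c" shows "seq_le a c"
proof -
  obtain C D where "C > 0" "D > 0" "\<And>n. a n \<le> C * b n" "\<And>n. b n \<le> D * c n"
    using assms unfolding seq_le_def by blast
  have "a n \<le> (C * D) * c n" for n
  proof -
    have "a n \<le> C * b n" by fact
    also have "\<dots> \<le> C * (D * c n)" using \<open>C > 0\<close> \<open>b n \<le> D * c n\<close> by simp
    finally show ?thesis by (simp add: mult.assoc)
  qed
  moreover have "C * D > 0" using \<open>C > 0\<close> \<open>D > 0\<close> by simp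
  ultimately show ?thesis unfolding seq_le_def by blast
qed

lemma upper_bounds_cofinal:
  assumes "\<Gamma> \<subseteq> S" and cofinal: "\<And>a. a \<in> S \<Longrightarrow> \<exists>b\<in>\<Gamma>. seq_le a b"
  shows "upper_bounds S = upper_bounds \<Gamma>"
proof
  show "upper_bounds S \<subseteq> upper_bounds \<Gamma>" using \<open>\<Gamma> \<subseteq> S\<close> unfolding upper_bounds_def by blast
  show "upper_bounds \<Gamma> \<subseteq> upper_bounds S"
    unfolding upper_bounds_def using cofinal seq_le_trans by blast
qed

lemma funpow_in_invariant_set:
  assumes "f ` M \<subseteq> M" "x \<in> M" shows "(f ^^ j) x \<in> M"
  using assms by (induction j) auto

lemma finite_cover_iter:
  assumes "finite \<U>" shows "finite (cover_iter M f \<U> n)"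
proof -
  let ?cyl = "\<lambda>s. {x\<in>M. \<forall>j\<le>n. (f ^^ j) x \<in> s j}"
  have "cover_iter M f \<U> n \<subseteq> ?cyl ` PiE {..n} (\<lambda>_. \<U>)"
  proof
    fix V assume "V \<in> cover_iter M f \<U> n"
    then obtain s where "\<forall>j\<le>n. s j \<in> \<U>" "V = ?cyl s"
      unfolding cover_iter_def by blast
    then have "restrict s {..n} \<in> PiE {..n} (\<lambda>_. \<U>)" "V = ?cyl (restrict s {..n})"
      by auto
    then show "V \<in> ?cyl ` PiE {..n} (\<lambda>_. \<U>)" by blast
  qed
  moreover have "finite (PiE {..n} (\<lambda>_. \<U>))" using assms by (intro finite_PiE) auto
  ultimately show ?thesis using finite_surj by blast
qed

lemma cover_iter_subset: "V \<in> cover_iter M f \<U> n \<Longrightarrow> V \<subseteq> M"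
  unfolding cover_iter_def by auto

lemma cylinder_in_cover_iter:
  assumes "\<forall>j\<le>n. s j \<in> \<U>" "x \<in> M" "\<forall>j\<le>n. (f ^^ j) x \<in> s j"
  shows "{y\<in>M. \<forall>j\<le>n. (f ^^ j) y \<in> s j} \<in> cover_iter M f \<U> n"
  unfolding cover_iter_def using assms by blast

lemma Union_cover_iter:
  assumes "\<Union>\<U> = M" "f ` M \<subseteq> M" shows "\<Union>(cover_iter M f \<U> n) = M"
proof
  show "\<Union>(cover_iter M f \<U> n) \<subseteq> M" using cover_iter_subset by blast
  show "M \<subseteq> \<Union>(cover_iter M f \<U> n)"
  proof
    fix x assume "x \<in> M"
    then have "(f ^^ j) x \<in> \<Union>\<U>" for j
      using assms funpow_in_invariant_set by metis
    then have "\<forall>j. \<exists>U. U \<in> \<U> \<and> (f ^^ j) x \<in> U" by blast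
    then obtain s where s: "\<forall>j. s j \<in> \<U> \<and> (f ^^ j) x \<in> s j"
      by (rule choice[THEN exE])
    then have "{y\<in>M. \<forall>j\<le>n. (f ^^ j) y \<in> s j} \<in> cover_iter M f \<U> n"
      using \<open>x \<in> M\<close> by (intro cylinder_in_cover_iter) auto
    then show "x \<in> \<Union>(cover_iter M f \<U> n)" using s \<open>x \<in> M\<close> by blast
  qed
qed

lemma cover_growth_in_Nats: "cover_growth M f \<U> n \<in> \<nat>"
  unfolding cover_growth_def by simp

lemma cover_growth_le_card:
  assumes "\<W> \<subseteq> cover_iter M f \<U> n" "finite \<W>" "\<Union>\<W> = M"
  shows "cover_growth M f \<U> n \<le> card \<W>"
  unfolding cover_growth_def using assms by (auto intro: wellorder_Inf_le1)

lemma cover_growth_attained: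
  assumes "finite \<U>" "\<Union>\<U> = M" "f ` M \<subseteq> M"
  obtains \<W> where "\<W> \<subseteq> cover_iter M f \<U> n" "finite \<W>" "\<Union>\<W> = M"
    "cover_growth M f \<U> n = card \<W>"
proof -
  let ?cards = "{card \<W> | \<W>. \<W> \<subseteq> cover_iter M f \<U> n \<and> finite \<W> \<and> \<Union>\<W> = M}"
  have "card (cover_iter M f \<U> n) \<in> ?cards"
    using finite_cover_iter[OF assms(1)] Union_cover_iter[OF assms(2,3)] by blast
  then have "Inf ?cards \<in> ?cards" by (rule wellorder_InfI)
  then show ?thesis using that unfolding cover_growth_def by auto
qed

lemma cover_iter_refinement:
  assumes refines: "\<forall>V\<in>\<V>. \<exists>U\<in>\<U>. V \<subseteq> U" and "W \<in> cover_iter M f \<V> n"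
  shows "\<exists>W'\<in>cover_iter M f \<U> n. W \<subseteq> W'"
proof -
  obtain s where s: "W \<noteq> {}" "\<forall>j\<le>n. s j \<in> \<V>" "W = {x\<in>M. \<forall>j\<le>n. (f ^^ j) x \<in> s j}"
    using assms(2) unfolding cover_iter_def by blast
  then have "\<forall>j. \<exists>U. j \<le> n \<longrightarrow> U \<in> \<U> \<and> s j \<subseteq> U"
    using refines by blast
  then obtain t where t: "\<forall>j. j \<le> n \<longrightarrow> t j \<in> \<U> \<and> s j \<subseteq> t j"
    by (rule choice[THEN exE])
  obtain x where "x \<in> W" using s(1) by blast
  let ?W' = "{y\<in>M. \<forall>j\<le>n. (f ^^ j) y \<in> t j}"
  have "W \<subseteq> ?W'" using s(3) t by blast
  moreover have "?W' \<in> cover_iter M f \<U> n"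
    using t \<open>x \<in> W\<close> \<open>W \<subseteq> ?W'\<close> by (intro cylinder_in_cover_iter) auto
  ultimately show ?thesis by blast
qed

lemma cover_growth_mono_refinement:
  assumes "finite \<V>" "\<Union>\<V> = M" "f ` M \<subseteq> M" and refines: "\<forall>V\<in>\<V>. \<exists>U\<in>\<U>. V \<subseteq> U"
  shows "cover_growth M f \<U> n \<le> cover_growth M f \<V> n"
proof -
  obtain \<W> where \<W>: "\<W> \<subseteq> cover_iter M f \<V> n" "finite \<W>" "\<Union>\<W> = M"
    and card: "cover_growth M f \<V> n = card \<W>"
    using cover_growth_attained[OF assms(1-3)] by blast
  have "\<forall>W\<in>\<W>. \<exists>W'. W' \<in> cover_iter M f \<U> n \<and> W \<subseteq> W'"
    using cover_iter_refinement[OF refines] \<W>(1) by blast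
  then obtain g where g: "\<forall>W\<in>\<W>. g W \<in> cover_iter M f \<U> n \<and> W \<subseteq> g W"
    by (rule bchoice[THEN exE])
  have "\<Union>(g ` \<W>) = M"
  proof
    show "\<Union>(g ` \<W>) \<subseteq> M" using g cover_iter_subset by blast
    show "M \<subseteq> \<Union>(g ` \<W>)" using g \<W>(3) by blast
  qed
  then have "cover_growth M f \<U> n \<le> card (g ` \<W>)"
    using g \<W>(2) by (intro cover_growth_le_card) auto
  also have "\<dots> \<le> card \<W>" using \<W>(2) by (simp add: card_image_le)
  finally show ?thesis using card by simp
qed

lemma finite_open_cover_trivial: "finite_open_cover M {M}"
  unfolding finite_open_cover_def by simp

lemma top_entropy_eq_0:
  assumes "\<And>\<U>. finite_open_cover M \<U> \<Longrightarrow> cover_growth M f \<U> \<in> LSeqs"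
  shows "top_entropy M f = 0"
proof -
  have limsup_0: "limsup (\<lambda>n. ereal (ln (cover_growth M f \<U> n) / real (Suc n))) = 0"
    if cover: "finite_open_cover M \<U>" for \<U>
  proof -
    obtain K p where "1 \<le> K" "0 \<le> p" "\<And>n. 1 \<le> n \<Longrightarrow> cover_growth M f \<U> n \<le> K * real n powr p"
      using LSeqs_polynomial_bound[OF assms[OF cover]] by blast
    then have "(\<lambda>n. ln (cover_growth M f \<U> n) / real (Suc n)) \<longlonglongrightarrow> 0"
      by (intro ln_div_Suc_tendsto_0_if_powr_bounded cover_growth_in_Nats)
    then show ?thesis
      by (simp add: zero_ereal_def lim_imp_Limsup)
  qed
  have "top_entropy M f = (SUP \<U>\<in>{\<U>. finite_open_cover M \<U>}. 0)"
    unfolding top_entropy_def using limsup_0 by (intro SUP_cong) auto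
  also have "\<dots> = 0"
    using finite_open_cover_trivial by (intro SUP_const) blast
  finally show ?thesis .
qed

lemma diameter_le_if_subset_ball:
  fixes S :: "'a::metric_space set"
  assumes "S \<subseteq> ball x r" "0 \<le> r" shows "diameter S \<le> 2 * r"
proof (cases "S = {}")
  case False
  have "dist a b \<le> 2 * r" if "a \<in> S" "b \<in> S" for a b
  proof -
    have "dist x a < r" "dist x b < r" using assms(1) that by auto
    then show ?thesis using dist_triangle3[of a b x] by linarith
  qed
  then show ?thesis using False unfolding diameter_def by (auto intro!: cSUP_least)
qed (use assms in simp)

lemma Lebesgue_number_balls:
  fixes M :: "'a::metric_space set"
  assumes "compact M" "\<forall>U\<in>\<U>. openin (top_of_set M) U" "\<Union>\<U> = M"
  obtains \<epsilon> where "0 < \<epsilon>" "\<And>x r. x \<in> M \<Longrightarrow> 0 < r \<Longrightarrow> r \<le> \<epsilon> \<Longrightarrow> \<exists>U\<in>\<U>. M \<inter> ball x r \<subseteq> U"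
proof (cases "M = {}")
  case False
  define \<C> where "\<C> = {T. open T \<and> M \<inter> T \<in> \<U>}"
  have M_sub: "M \<subseteq> \<Union>\<C>"
  proof
    fix x assume "x \<in> M"
    then obtain U where "U \<in> \<U>" "x \<in> U" using assms(3) by blast
    moreover obtain T where "open T" "U = M \<inter> T"
      using assms(2) \<open>U \<in> \<U>\<close> by (meson openin_open)
    ultimately show "x \<in> \<Union>\<C>" unfolding \<C>_def by blast
  qed
  then have "\<C> \<noteq> {}" using False by blast
  then obtain \<delta> where "0 < \<delta>" and \<delta>: "\<And>T. T \<subseteq> M \<Longrightarrow> diameter T < \<delta> \<Longrightarrow> \<exists>B\<in>\<C>. T \<subseteq> B"
    using Lebesgue_number_lemma[OF assms(1) _ M_sub] unfolding \<C>_def by blast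
  show ?thesis
  proof (rule that[of "\<delta> / 3"])
    fix x r assume "x \<in> M" "0 < r" "r \<le> \<delta> / 3"
    then have "diameter (M \<inter> ball x r) < \<delta>"
      using diameter_le_if_subset_ball[of "M \<inter> ball x r" x r] \<open>0 < \<delta>\<close> by auto
    then obtain B where "B \<in> \<C>" "M \<inter> ball x r \<subseteq> B" using \<delta> by blast
    then show "\<exists>U\<in>\<U>. M \<inter> ball x r \<subseteq> U" unfolding \<C>_def by blast
  qed (use \<open>0 < \<delta>\<close> in simp)
qed (use that[of 1] in simp)

definition ball_cover :: "'a::metric_space set \<Rightarrow> 'a set \<Rightarrow> real \<Rightarrow> 'a set set" where
  "ball_cover M C r = (\<lambda>x. M \<inter> ball x r) ` C"

lemma finite_open_cover_ball_cover:
  assumes "finite C" "M \<subseteq> (\<Union>x\<in>C. ball x r)"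
  shows "finite_open_cover M (ball_cover M C r)"
  using assms unfolding finite_open_cover_def ball_cover_def by (auto simp: openin_open_Int)

lemma compact_finite_nets:
  fixes M :: "'a::metric_space set"
  assumes "compact M"
  obtains C where "\<And>k. finite (C k) \<and> C k \<subseteq> M \<and> M \<subseteq> (\<Union>x\<in>C k. ball x (1 / Suc k))"
proof -
  have "\<exists>C. finite C \<and> C \<subseteq> M \<and> M \<subseteq> (\<Union>x\<in>C. ball x (1 / Suc k))" for k
  proof -
    have "M \<subseteq> (\<Union>x\<in>M. ball x (1 / Suc k))" by auto
    then show ?thesis using compactE_image[OF assms] by (metis open_ball)
  qed
  then show ?thesis using that by metis
qed

lemma gen_entropy_eq_sup_cut_countable:
  fixes M :: "'a::metric_space set"
  assumes "compact M" "f ` M \<subseteq> M"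
  obtains \<V> :: "nat \<Rightarrow> 'a set set" where "\<And>k. finite_open_cover M (\<V> k)"
    "gen_entropy M f = sup_cut (range (\<lambda>k. cover_growth M f (\<V> k)))"
proof -
  obtain C where C: "\<And>k. finite (C k) \<and> C k \<subseteq> M \<and> M \<subseteq> (\<Union>x\<in>C k. ball x (1 / Suc k))"
    using compact_finite_nets[OF assms(1)] by blast
  define \<V> where "\<V> k = ball_cover M (C k) (1 / Suc k)" for k
  have \<V>: "finite_open_cover M (\<V> k)" for k
    unfolding \<V>_def using C by (intro finite_open_cover_ball_cover) auto
  have cofinal: "\<exists>k. seq_le (cover_growth M f \<U>) (cover_growth M f (\<V> k))"
    if "finite_open_cover M \<U>" for \<U>
  proof -
    have "\<forall>U\<in>\<U>. openin (top_of_set M) U" "\<Union>\<U> = M"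
      using that unfolding finite_open_cover_def by auto
    then obtain \<epsilon> where "0 < \<epsilon>" and \<epsilon>: "\<And>x r. x \<in> M \<Longrightarrow> 0 < r \<Longrightarrow> r \<le> \<epsilon> \<Longrightarrow> \<exists>U\<in>\<U>. M \<inter> ball x r \<subseteq> U"
      using Lebesgue_number_balls[OF assms(1)] by metis
    obtain k where "inverse (Suc k) < \<epsilon>" using reals_Archimedean[OF \<open>0 < \<epsilon>\<close>] by blast
    then have "1 / Suc k \<le> \<epsilon>" by (simp add: inverse_eq_divide)
    have "\<forall>V\<in>\<V> k. \<exists>U\<in>\<U>. V \<subseteq> U"
    proof
      fix V assume "V \<in> \<V> k"
      then obtain x where "x \<in> C k" "V = M \<inter> ball x (1 / Suc k)"
        unfolding \<V>_def ball_cover_def by blast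
      then show "\<exists>U\<in>\<U>. V \<subseteq> U"
        using \<epsilon>[of x "1 / Suc k"] C[of k] \<open>1 / Suc k \<le> \<epsilon>\<close> by auto
    qed
    then have "cover_growth M f \<U> n \<le> cover_growth M f (\<V> k) n" for n
      using \<V>[of k] assms(2) unfolding finite_open_cover_def
      by (intro cover_growth_mono_refinement) auto
    then show ?thesis by (blast intro: seq_le_if_le)
  qed
  have "upper_bounds {cover_growth M f \<U> | \<U>. finite_open_cover M \<U>} =
      upper_bounds (range (\<lambda>k. cover_growth M f (\<V> k)))"
  proof (rule upper_bounds_cofinal)
    show "range (\<lambda>k. cover_growth M f (\<V> k)) \<subseteq> {cover_growth M f \<U> | \<U>. finite_open_cover M \<U>}"
      using \<V> by blast
    fix a assume "a \<in> {cover_growth M f \<U> | \<U>. finite_open_cover M \<U>}"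
    then obtain \<U> where "finite_open_cover M \<U>" "a = cover_growth M f \<U>" by blast
    then show "\<exists>b\<in>range (\<lambda>k. cover_growth M f (\<V> k)). seq_le a b"
      using cofinal by blast
  qed
  then have "gen_entropy M f = sup_cut (range (\<lambda>k. cover_growth M f (\<V> k)))"
    unfolding gen_entropy_def sup_cut_def by simp
  with \<V> show ?thesis by (rule that)
qed

theorem mainTheorem5:
  fixes M :: "'a::metric_space set" and f :: "'a \<Rightarrow> 'a"
  assumes "compact M"
    and "continuous_on M f"
    and "f ` M \<subseteq> M"
    and "\<And>\<U>. finite_open_cover M \<U> \<Longrightarrow> cover_growth M f \<U> \<in> LSeqs"
  shows "gen_entropy M f \<in> LBar \<and> top_entropy M f = 0"
proof
  show "gen_entropy M f \<in> LBar"
  proof (rule gen_entropy_eq_sup_cut_countable[OF assms(1,3)])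
    fix \<V> :: "nat \<Rightarrow> 'a set set"
    assume "\<And>k. finite_open_cover M (\<V> k)"
      and "gen_entropy M f = sup_cut (range (\<lambda>k. cover_growth M f (\<V> k)))"
    then show ?thesis unfolding LBar_def using assms(4) by blast
  qed
  show "top_entropy M f = 0" using assms(4) by (rule top_entropy_eq_0)
qed

end
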